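(* Let $A$ be a synaptic algebra, $p,q\in P$, $r:=(p\vee q)\wedge(p\vee q^{\perp})\wedge(p^{\perp}\vee q)\wedge(p^{\perp}\vee q^{\perp})$, and let $c:=(pqp+p^{\perp}q^{\perp}p^{\perp})^{1/2}$ and $s:=(pq^{\perp}p+p^{\perp}qp^{\perp})^{1/2}$. Then: (i) $c^2=pqp+p^{\perp}q^{\perp}p^{\perp}=1-(p-q)^2=(p-q^{\perp})^2=(p+q-1)^2$; (ii) $s^2=pq^{\perp}p+p^{\perp}qp^{\perp}=(p-q)^2$; (iii) $pc^2=pqp=c^2p$, $qc^2=qpq=c^2q$, $ps^2=pq^{\perp}p=s^2p$, $qs^2=qp^{\perp}q=s^2q$, and $s^2p^{\perp}=p^{\perp}qp^{\perp}=p^{\perp}s^2$; (iv) $c=|p-q^{\perp}|$ and $s=|p-q|$; (v) $c^2+s^2=1$; (vi) $0\le c^2,s^2,c,s\le1$, $c^2\le c$ and $s^2\le s$; (vii) $C(c)=C(c^2)=C(s^2)=C(s)$; (viii) $cCp$, $cCq$, $cCr$, $sCp$, $sCq$, $sCr$ and $cCs$; (ix) $C(p)\cap C(q)\subseteq C(c)=C(s)$.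
   Context: Synaptic algebra (Foulis): $R$ is a real linear associative algebra with unit $1$, and $A\subseteq R$ is a real linear subspace with $1\in A$. For $a,b\in A$ write $aCb$ iff $ab=ba$; $C(a):=\{b\in A: aCb\}$; $CC(a):=\{b\in A: bCd \text{ for all } d\in C(a)\}$. $A$ is a synaptic algebra with enveloping algebra $R$ iff: (SA1) $A$ is a partially ordered archimedean real linear space with positive cone $A^+$, $1$ is an order unit, $\|\cdot\|$ the order-unit norm; (SA2) $a\in A\Rightarrow a^2\in A^+$; (SA3) $a,b\in A^+\Rightarrow aba\in A^+$; (SA4) if $a\in A$, $b\in A^+$, $aba=0$ then $ab=ba=0$; (SA5) if $a\in A^+$ there is $b\in A^+\cap CC(a)$ with $b^2=a$; (SA6) for $a\in A$ there is $p=p^2\in A$ with $ab=0\Leftrightarrow pb=0$ for all $b\in A$; (SA7) if $1\le a$ there is $b\in A$ with $ab=ba=1$; (SA8) if $a,b\in A$, $a_1\le a_2\le\cdots$ are pairwise commuting elements of $C(b)$ with $\|a-a_n\|\to0$, then $a\in C(b)$. $A$ is nondegenerate. $P:=\{p\in A:p=p^2\}$ with the inherited order is an orthomodular lattice with $p^{\perp}:=1-p$, meet $\wedge$, join $\vee$. For $0\le a$, $a^{1/2}$ is the unique positive square root of $a$ in $A$; $|a|:=(a^2)^{1/2}$. ($c$ and $s$ are called the cosine and sine effects of $q$ with respect to $p$.) *)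

theory Defs
  imports Main "HOL.Real_Vector_Spaces"
begin

text \<open>Synaptic algebra A with enveloping algebra R (a real associative unital algebra,
  modelled by the type class real_algebra_1). A is a subset of R, Ap is its positive cone.\<close>

definition sa_le :: "'r::real_algebra_1 set \<Rightarrow> 'r \<Rightarrow> 'r \<Rightarrow> bool" where
  "sa_le Ap a b \<longleftrightarrow> b - a \<in> Ap"

definition comm :: "'r::real_algebra_1 \<Rightarrow> 'r \<Rightarrow> bool" where
  "comm a b \<longleftrightarrow> a * b = b * a"

definition Cm :: "'r::real_algebra_1 set \<Rightarrow> 'r \<Rightarrow> 'r set" where
  "Cm A a = {b \<in> A. comm a b}"

definition CCm :: "'r::real_algebra_1 set \<Rightarrow> 'r \<Rightarrow> 'r set" where
  "CCm A a = {b \<in> A. \<forall>d \<in> Cm A a. comm b d}"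

definition ou_norm :: "'r::real_algebra_1 set \<Rightarrow> 'r \<Rightarrow> real" where
  "ou_norm Ap a = Inf {l::real. 0 < l \<and> sa_le Ap (- (l *\<^sub>R 1)) a \<and> sa_le Ap a (l *\<^sub>R 1)}"

definition synaptic_algebra :: "'r::real_algebra_1 set \<Rightarrow> 'r set \<Rightarrow> bool" where
  "synaptic_algebra A Ap \<longleftrightarrow>
    \<comment> \<open>A is a real linear subspace of R containing 1\<close>
    0 \<in> A \<and> 1 \<in> A \<and> (\<forall>a\<in>A. \<forall>b\<in>A. a + b \<in> A) \<and> (\<forall>a\<in>A. \<forall>t::real. t *\<^sub>R a \<in> A) \<and>
    \<comment> \<open>(SA1) partially ordered by the cone Ap, archimedean, 1 an order unit\<close>
    Ap \<subseteq> A \<and> 0 \<in> Ap \<and> (\<forall>a\<in>Ap. \<forall>b\<in>Ap. a + b \<in> Ap) \<and>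
    (\<forall>a\<in>Ap. \<forall>t::real. 0 \<le> t \<longrightarrow> t *\<^sub>R a \<in> Ap) \<and>
    (\<forall>a\<in>Ap. - a \<in> Ap \<longrightarrow> a = 0) \<and>
    (\<forall>a\<in>A. \<forall>b\<in>A. (\<forall>n::nat. sa_le Ap (real n *\<^sub>R a) b) \<longrightarrow> sa_le Ap a 0) \<and>
    (\<forall>a\<in>A. \<exists>n::nat. sa_le Ap a (real n *\<^sub>R 1)) \<and>
    \<comment> \<open>(SA2)\<close>
    (\<forall>a\<in>A. a * a \<in> Ap) \<and>
    \<comment> \<open>(SA3)\<close>
    (\<forall>a\<in>Ap. \<forall>b\<in>Ap. a * b * a \<in> Ap) \<and>
    \<comment> \<open>(SA4)\<close>
    (\<forall>a\<in>A. \<forall>b\<in>Ap. a * b * a = 0 \<longrightarrow> a * b = 0 \<and> b * a = 0) \<and>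
    \<comment> \<open>(SA5)\<close>
    (\<forall>a\<in>Ap. \<exists>b\<in>Ap \<inter> CCm A a. b * b = a) \<and>
    \<comment> \<open>(SA6)\<close>
    (\<forall>a\<in>A. \<exists>p\<in>A. p * p = p \<and> (\<forall>b\<in>A. a * b = 0 \<longleftrightarrow> p * b = 0)) \<and>
    \<comment> \<open>(SA7)\<close>
    (\<forall>a\<in>A. sa_le Ap 1 a \<longrightarrow> (\<exists>b\<in>A. a * b = 1 \<and> b * a = 1)) \<and>
    \<comment> \<open>(SA8)\<close>
    (\<forall>a\<in>A. \<forall>b\<in>A. \<forall>x::nat \<Rightarrow> 'r.
        (\<forall>n. x n \<in> Cm A b) \<and> (\<forall>n. sa_le Ap (x n) (x (Suc n))) \<and>
        (\<forall>m n. comm (x m) (x n)) \<and> (\<lambda>n. ou_norm Ap (a - x n)) \<longlonglongrightarrow> 0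
        \<longrightarrow> a \<in> Cm A b) \<and>
    \<comment> \<open>nondegenerate\<close>
    (0::'r) \<noteq> 1"

definition projs :: "'r::real_algebra_1 set \<Rightarrow> 'r set" where
  "projs A = {p \<in> A. p * p = p}"

definition pmeet :: "'r::real_algebra_1 set \<Rightarrow> 'r set \<Rightarrow> 'r \<Rightarrow> 'r \<Rightarrow> 'r" where
  "pmeet A Ap p q = (THE r. r \<in> projs A \<and> sa_le Ap r p \<and> sa_le Ap r q \<and>
      (\<forall>t\<in>projs A. sa_le Ap t p \<and> sa_le Ap t q \<longrightarrow> sa_le Ap t r))"

definition pjoin :: "'r::real_algebra_1 set \<Rightarrow> 'r set \<Rightarrow> 'r \<Rightarrow> 'r \<Rightarrow> 'r" where
  "pjoin A Ap p q = (THE r. r \<in> projs A \<and> sa_le Ap p r \<and> sa_le Ap q r \<and>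
      (\<forall>t\<in>projs A. sa_le Ap p t \<and> sa_le Ap q t \<longrightarrow> sa_le Ap r t))"

definition sa_sqrt :: "'r::real_algebra_1 set \<Rightarrow> 'r \<Rightarrow> 'r" where
  "sa_sqrt Ap a = (THE b. b \<in> Ap \<and> b * b = a)"

definition sa_abs :: "'r::real_algebra_1 set \<Rightarrow> 'r \<Rightarrow> 'r" where
  "sa_abs Ap a = sa_sqrt Ap (a * a)"

end

theory Submission
  imports Defs
begin

text \<open>
  The radicands of c and s are 1 - (p - q)^2 and (p - q)^2, and each is a compression
  e a e + (1 - e) b (1 - e) both for e = p and for e = q; this is ring arithmetic with two
  idempotents and gives (i)-(iii) and (v). So c^2 and s^2 = 1 - c^2 commute with p and q,
  and since a positive square root lies in the double commutant of its square,
  C(c) = C(c^2) = C(s^2) = C(s), which yields (vii)-(ix). For r note that each of the four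
  joins lies above p or 1 - p and above q or 1 - q, so it commutes with p and q, and meets
  preserve this (the join of e and f is the carrier projection of e + f from (SA6), which
  commutes with whatever commutes with e + f). The bounds (vi) come from
  1 - c = (1 - c^2)(1 + c)^-1, a product of commuting positive elements by (SA7).
\<close>

lemma idempotent_absorb:
  fixes e :: "'a::semigroup_mult"
  assumes "e * e = e"
  shows "e * (e * z) = e * z"
  using assms by (metis mult.assoc)

lemma comm_sym: "comm a b \<longleftrightarrow> comm b a"
  by (auto simp: comm_def)

lemma comm_one: "comm 1 d"
  by (simp add: comm_def)

lemma comm_add: "comm a d \<Longrightarrow> comm b d \<Longrightarrow> comm (a + b) d"
  by (simp add: comm_def algebra_simps)

lemma comm_diff: "comm a d \<Longrightarrow> comm b d \<Longrightarrow> comm (a - b) d"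
  by (simp add: comm_def algebra_simps)

lemma comm_mult: "comm a d \<Longrightarrow> comm b d \<Longrightarrow> comm (a * b) d"
  by (simp add: comm_def) (metis mult.assoc)

lemma comm_one_minus_iff: "comm (1 - a) b \<longleftrightarrow> comm a b"
  by (auto simp: comm_def algebra_simps)

lemma Cm_one_minus: "Cm A (1 - a) = Cm A a"
  by (simp add: Cm_def comm_one_minus_iff)

lemma idempotent_compression:
  fixes e a b :: "'a::ring_1"
  assumes "e * e = e"
  shows "e * (e * a * e + (1 - e) * b * (1 - e)) = e * a * e"
    and "(e * a * e + (1 - e) * b * (1 - e)) * e = e * a * e"
  using assms idempotent_absorb[OF assms] by (simp_all add: algebra_simps)

lemma idempotent_pair_squares:
  fixes p q :: "'a::ring_1"
  assumes p: "p * p = p" and q: "q * q = q"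
  shows "p * q * p + (1 - p) * (1 - q) * (1 - p) = 1 - (p - q) * (p - q)"
    and "1 - (p - q) * (p - q) = (p - (1 - q)) * (p - (1 - q))"
    and "(p - (1 - q)) * (p - (1 - q)) = (p + q - 1) * (p + q - 1)"
    and "p * (1 - q) * p + (1 - p) * q * (1 - p) = (p - q) * (p - q)"
  using p q idempotent_absorb[OF p] idempotent_absorb[OF q] by (simp_all add: algebra_simps)

lemma idempotent_pair_compressions:
  fixes p q :: "'a::ring_1"
  assumes p: "p * p = p" and q: "q * q = q"
    and X: "X = p * q * p + (1 - p) * (1 - q) * (1 - p)"
    and Y: "Y = p * (1 - q) * p + (1 - p) * q * (1 - p)"
  shows "p * X = p * q * p" "p * q * p = X * p" "q * X = q * p * q" "q * p * q = X * q"
    "p * Y = p * (1 - q) * p" "p * (1 - q) * p = Y * p"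
    "q * Y = q * (1 - p) * q" "q * (1 - p) * q = Y * q"
    "Y * (1 - p) = (1 - p) * q * (1 - p)" "(1 - p) * q * (1 - p) = (1 - p) * Y"
proof -
  have p': "(1 - p) * (1 - p) = 1 - p"
    using p by (simp add: algebra_simps)
  have swap: "(p - q) * (p - q) = (q - p) * (q - p)"
    by (simp add: algebra_simps)
  have X_swap: "X = q * p * q + (1 - q) * (1 - p) * (1 - q)"
    using idempotent_pair_squares(1)[OF p q] idempotent_pair_squares(1)[OF q p] X swap
    by simp
  have Y_swap: "Y = q * (1 - p) * q + (1 - q) * p * (1 - q)"
    using idempotent_pair_squares(4)[OF p q] idempotent_pair_squares(4)[OF q p] Y swap
    by simp
  have Y_compl: "Y = (1 - p) * q * (1 - p) + (1 - (1 - p)) * (1 - q) * (1 - (1 - p))"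
    using Y by simp
  show "p * X = p * q * p" "p * q * p = X * p"
    using idempotent_compression[OF p] X by simp_all
  show "q * X = q * p * q" "q * p * q = X * q"
    using idempotent_compression[OF q] X_swap by simp_all
  show "p * Y = p * (1 - q) * p" "p * (1 - q) * p = Y * p"
    using idempotent_compression[OF p] Y by simp_all
  show "q * Y = q * (1 - p) * q" "q * (1 - p) * q = Y * q"
    using idempotent_compression[OF q] Y_swap by simp_all
  show "Y * (1 - p) = (1 - p) * q * (1 - p)" "(1 - p) * q * (1 - p) = (1 - p) * Y"
    using idempotent_compression[OF p'] Y_compl by simp_all
qed

locale synaptic =
  fixes A Ap :: "'r::real_algebra_1 set"
  assumes synaptic: "synaptic_algebra A Ap"
begin

lemma one_mem: "1 \<in> A"
  using synaptic by (simp add: synaptic_algebra_def)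

lemma add_mem: "a \<in> A \<Longrightarrow> b \<in> A \<Longrightarrow> a + b \<in> A"
  using synaptic by (simp add: synaptic_algebra_def)

lemma scaleR_mem: "a \<in> A \<Longrightarrow> t *\<^sub>R a \<in> A"
  using synaptic by (simp add: synaptic_algebra_def)

lemma pos_subset: "Ap \<subseteq> A"
  using synaptic by (simp add: synaptic_algebra_def)

lemma pos_mem: "a \<in> Ap \<Longrightarrow> a \<in> A"
  using pos_subset by blast

lemma pos_add: "a \<in> Ap \<Longrightarrow> b \<in> Ap \<Longrightarrow> a + b \<in> Ap"
  using synaptic by (simp add: synaptic_algebra_def)

lemma pos_antisym: "a \<in> Ap \<Longrightarrow> - a \<in> Ap \<Longrightarrow> a = 0"
  using synaptic by (simp add: synaptic_algebra_def)

lemma square_pos: "a \<in> A \<Longrightarrow> a * a \<in> Ap"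
  using synaptic by (simp add: synaptic_algebra_def)

lemma sandwich_pos: "a \<in> Ap \<Longrightarrow> b \<in> Ap \<Longrightarrow> a * b * a \<in> Ap"
  using synaptic by (simp add: synaptic_algebra_def)

lemma sandwich_eq_zero:
  "a \<in> A \<Longrightarrow> b \<in> Ap \<Longrightarrow> a * b * a = 0 \<Longrightarrow> a * b = 0 \<and> b * a = 0"
  using synaptic by (simp add: synaptic_algebra_def)

lemma sqrt_exists: "a \<in> Ap \<Longrightarrow> \<exists>b\<in>Ap \<inter> CCm A a. b * b = a"
  using synaptic by (simp add: synaptic_algebra_def)

lemma annihilator_proj_exists:
  "a \<in> A \<Longrightarrow> \<exists>k\<in>A. k * k = k \<and> (\<forall>b\<in>A. a * b = 0 \<longleftrightarrow> k * b = 0)"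
  using synaptic by (simp add: synaptic_algebra_def)

lemma inverse_exists: "a \<in> A \<Longrightarrow> sa_le Ap 1 a \<Longrightarrow> \<exists>b\<in>A. a * b = 1 \<and> b * a = 1"
  using synaptic by (simp add: synaptic_algebra_def)

lemma uminus_mem: "a \<in> A \<Longrightarrow> - a \<in> A"
  using scaleR_mem[of a "-1"] by simp

lemma diff_mem: "a \<in> A \<Longrightarrow> b \<in> A \<Longrightarrow> a - b \<in> A"
  using add_mem uminus_mem by (metis diff_conv_add_uminus)

lemma one_pos: "1 \<in> Ap"
  using square_pos[OF one_mem] by simp

lemma sa_le_antisym: "sa_le Ap a b \<Longrightarrow> sa_le Ap b a \<Longrightarrow> a = b"
  using pos_antisym[of "b - a"] by (simp add: sa_le_def)

lemma pos_add_eq_zero: "u \<in> Ap \<Longrightarrow> v \<in> Ap \<Longrightarrow> u + v = 0 \<Longrightarrow> u = 0"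
  using pos_antisym by (metis add_eq_0_iff)

lemma square_eq_zero: "y \<in> A \<Longrightarrow> y * y = 0 \<Longrightarrow> y = 0"
  using sandwich_eq_zero[OF _ one_pos, of y] by simp

lemma jordan_mem: "a \<in> A \<Longrightarrow> b \<in> A \<Longrightarrow> a * b + b * a \<in> A"
proof -
  assume a: "a \<in> A" and b: "b \<in> A"
  have "(a + b) * (a + b) \<in> A" "a * a \<in> A" "b * b \<in> A"
    using a b by (simp_all add: pos_mem square_pos add_mem)
  then have "(a + b) * (a + b) - a * a - b * b \<in> A"
    by (simp add: diff_mem)
  moreover have "(a + b) * (a + b) - a * a - b * b = a * b + b * a"
    by (simp add: algebra_simps)
  ultimately show ?thesis by simp
qed

lemma half_mem: "x + x \<in> A \<Longrightarrow> x \<in> A"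
proof -
  assume "x + x \<in> A"
  then have "(1/2::real) *\<^sub>R (x + x) \<in> A"
    by (rule scaleR_mem)
  moreover have "(1/2::real) *\<^sub>R (x + x) = x"
    by (simp only: scaleR_2[symmetric] scaleR_scaleR) simp
  ultimately show ?thesis
    by simp
qed

lemma commuting_mult_mem:
  assumes "a \<in> A" "b \<in> A" "comm a b"
  shows "a * b \<in> A"
proof (rule half_mem)
  show "a * b + a * b \<in> A"
    using jordan_mem[OF assms(1,2)] assms(3) by (simp add: comm_def)
qed

lemma triple_mem:
  assumes x: "x \<in> A" and y: "y \<in> A" and z: "z \<in> A"
  shows "x * y * z + z * y * x \<in> A"
proof -
  let ?j = "\<lambda>a b. a * b + b * a"
  have "?j (?j x y) z + ?j (?j y z) x - ?j (?j x z) y \<in> A"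
    using x y z by (intro diff_mem add_mem jordan_mem)
  moreover have "?j (?j x y) z + ?j (?j y z) x - ?j (?j x z) y
      = (x * y * z + z * y * x) + (x * y * z + z * y * x)"
    by (simp add: algebra_simps)
  ultimately have "(x * y * z + z * y * x) + (x * y * z + z * y * x) \<in> A"
    by simp
  then show ?thesis
    by (rule half_mem)
qed

lemma commuting_sandwich_pos:
  assumes x: "x \<in> A" and a: "a \<in> Ap" and xa: "comm x a"
  shows "x * a * x \<in> Ap"
proof -
  obtain e where e: "e \<in> Ap" "e \<in> CCm A a" "e * e = a"
    using sqrt_exists[OF a] by blast
  have ex: "comm e x"
    using e(2) x xa unfolding CCm_def Cm_def comm_def by auto
  have "x * a * x = x * e * (e * x)"
    using e(3)[symmetric] by (simp add: mult.assoc)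
  also have "\<dots> = (e * x) * (e * x)"
    using ex by (simp add: comm_def)
  finally have "x * a * x = (e * x) * (e * x)" .
  moreover have "e * x \<in> A"
    using commuting_mult_mem[OF pos_mem[OF e(1)] x ex] .
  ultimately show ?thesis
    using square_pos by simp
qed

lemma commuting_mult_pos:
  assumes a: "a \<in> Ap" and b: "b \<in> Ap" and ab: "comm a b"
  shows "a * b \<in> Ap"
proof -
  obtain e where e: "e \<in> Ap" "e \<in> CCm A a" "e * e = a"
    using sqrt_exists[OF a] by blast
  have "comm e b"
    using e(2) pos_mem[OF b] ab unfolding CCm_def Cm_def comm_def by auto
  then have "e * b * e = e * (e * b)"
    unfolding comm_def by (metis mult.assoc)
  then have "e * b * e = a * b"
    using e(3) by (simp add: mult.assoc[symmetric])
  then show ?thesis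
    using sandwich_pos[OF e(1) b] by simp
qed

lemma commuting_pos_square_eq:
  assumes b: "b \<in> Ap" and d: "d \<in> Ap" and bd: "comm b d" and sq: "b * b = d * d"
  shows "b = d"
proof -
  define x where "x = b - d"
  have x: "x \<in> A"
    unfolding x_def using b d by (intro diff_mem pos_mem)
  have xb: "comm x b" and xd: "comm x d"
    using bd unfolding x_def comm_def by (simp_all add: algebra_simps)
  have "x * b * x + x * d * x = x * ((b + d) * (b - d))"
    unfolding x_def by (simp add: algebra_simps)
  also have "(b + d) * (b - d) = 0"
    using bd sq by (simp add: comm_def algebra_simps)
  finally have sum: "x * b * x + x * d * x = 0"
    by simp
  have xbx: "x * b * x = 0"
    using pos_add_eq_zero[OF commuting_sandwich_pos[OF x b xb] commuting_sandwich_pos[OF x d xd] sum] .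
  then have "x * d * x = 0"
    using sum by simp
  then have "x * b = 0" "x * d = 0"
    using sandwich_eq_zero[OF x b xbx] sandwich_eq_zero[OF x d] by auto
  then have "x * x = 0"
    unfolding x_def by (simp add: algebra_simps)
  then show ?thesis
    using square_eq_zero[OF x] unfolding x_def by simp
qed

lemma sa_sqrt_props:
  assumes a: "a \<in> Ap"
  shows "sa_sqrt Ap a \<in> Ap" "sa_sqrt Ap a \<in> CCm A a" "sa_sqrt Ap a * sa_sqrt Ap a = a"
proof -
  obtain b where b: "b \<in> Ap" "b \<in> CCm A a" "b * b = a"
    using sqrt_exists[OF a] by blast
  have "d = b" if d: "d \<in> Ap" "d * d = a" for d
  proof (rule commuting_pos_square_eq[OF d(1) b(1)])
    have "d \<in> Cm A a"
      using pos_mem[OF d(1)] d(2)[symmetric] by (simp add: Cm_def comm_def mult.assoc)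
    then show "comm d b"
      using b(2) unfolding CCm_def comm_def by auto
  qed (use b d in simp)
  then have "sa_sqrt Ap a = b"
    unfolding sa_sqrt_def using b by blast
  then show "sa_sqrt Ap a \<in> Ap" "sa_sqrt Ap a \<in> CCm A a" "sa_sqrt Ap a * sa_sqrt Ap a = a"
    using b by simp_all
qed

lemma Cm_sa_sqrt:
  assumes a: "a \<in> Ap"
  shows "Cm A (sa_sqrt Ap a) = Cm A a"
proof
  show "Cm A (sa_sqrt Ap a) \<subseteq> Cm A a"
    using comm_mult[of "sa_sqrt Ap a" _ "sa_sqrt Ap a"] sa_sqrt_props(3)[OF a]
    by (auto simp: Cm_def)
  show "Cm A a \<subseteq> Cm A (sa_sqrt Ap a)"
    using sa_sqrt_props(2)[OF a] unfolding Cm_def CCm_def by auto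
qed

lemma proj_mem: "e \<in> projs A \<Longrightarrow> e \<in> A"
  and proj_idem: "e \<in> projs A \<Longrightarrow> e * e = e"
  by (simp_all add: projs_def)

lemma proj_pos: "e \<in> projs A \<Longrightarrow> e \<in> Ap"
  using square_pos[of e] by (simp add: projs_def)

lemma proj_compl: "e \<in> projs A \<Longrightarrow> 1 - e \<in> projs A"
  using diff_mem[OF one_mem] by (simp add: projs_def algebra_simps)

lemma proj_mult_eq_self_sym:
  assumes e: "e \<in> projs A" and f: "f \<in> projs A" and ef: "e * f = e"
  shows "f * e = e"
proof -
  have "e * (1 - f) * e = 0"
    using ef proj_idem[OF e] by (simp add: algebra_simps)
  then have "(1 - f) * e = 0"
    using sandwich_eq_zero[OF proj_mem[OF e] proj_pos[OF proj_compl[OF f]]] by simp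
  then show ?thesis
    by (simp add: algebra_simps)
qed

lemma proj_le_iff:
  assumes e: "e \<in> projs A" and f: "f \<in> projs A"
  shows "sa_le Ap e f \<longleftrightarrow> e * f = e"
proof
  assume "sa_le Ap e f"
  then have "(1 - f) * (f - e) * (1 - f) \<in> Ap"
    using sandwich_pos[OF proj_pos[OF proj_compl[OF f]]] by (simp add: sa_le_def)
  moreover have "(1 - f) * (f - e) * (1 - f) = - ((1 - f) * e * (1 - f))"
    using proj_idem[OF f] by (simp add: algebra_simps)
  ultimately have "(1 - f) * e * (1 - f) = 0"
    using pos_antisym sandwich_pos[OF proj_pos[OF proj_compl[OF f]] proj_pos[OF e]] by simp
  then have "e * (1 - f) = 0"
    using sandwich_eq_zero[OF proj_mem[OF proj_compl[OF f]] proj_pos[OF e]] by simp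
  then show "e * f = e"
    by (simp add: algebra_simps)
next
  assume ef: "e * f = e"
  then have "(f - e) * (f - e) = f - e"
    using proj_mult_eq_self_sym[OF e f ef] proj_idem[OF e] proj_idem[OF f]
    by (simp add: algebra_simps)
  then show "sa_le Ap e f"
    using square_pos[OF diff_mem[OF proj_mem[OF f] proj_mem[OF e]]] by (simp add: sa_le_def)
qed

lemma proj_le_imp_comm:
  "e \<in> projs A \<Longrightarrow> f \<in> projs A \<Longrightarrow> sa_le Ap e f \<Longrightarrow> comm e f"
  using proj_le_iff proj_mult_eq_self_sym by (simp add: comm_def)

lemma sa_le_compl_iff: "sa_le Ap (1 - b) (1 - a) \<longleftrightarrow> sa_le Ap a b"
  by (simp add: sa_le_def)

lemma proj_comm_of_compress_eq:
  assumes k: "k \<in> projs A" and x: "x \<in> A" and kxk: "k * x * k = k * x"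
  shows "comm k x"
proof -
  have k': "1 - k \<in> A"
    using proj_mem[OF proj_compl[OF k]] .
  \<comment> \<open>\<open>(1 - k) x k\<close> is a Jordan triple product, as \<open>k x (1 - k) = 0\<close>, and it squares to zero.\<close>
  have "(1 - k) * x * k + k * x * (1 - k) \<in> A"
    using triple_mem[OF k' x proj_mem[OF k]] .
  moreover have "k * x * (1 - k) = 0"
    using kxk by (simp add: algebra_simps)
  ultimately have y: "(1 - k) * x * k \<in> A"
    by simp
  have "((1 - k) * x * k) * ((1 - k) * x * k) = (1 - k) * x * (k * (1 - k)) * x * k"
    by (simp add: mult.assoc)
  also have "k * (1 - k) = 0"
    using proj_idem[OF k] by (simp add: algebra_simps)
  finally have "(1 - k) * x * k = 0"
    using square_eq_zero[OF y] by simp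
  then have "x * k = k * x * k"
    by (simp add: left_diff_distrib)
  then show ?thesis
    using kxk by (simp add: comm_def)
qed

lemma annihilator_proj_comm:
  assumes a: "a \<in> A" and k: "k \<in> projs A" and ann: "\<forall>b\<in>A. a * b = 0 \<longleftrightarrow> k * b = 0"
    and x: "x \<in> A" and ax: "comm a x"
  shows "comm k x"
proof (rule proj_comm_of_compress_eq[OF k x])
  have kk: "k * k = k"
    using proj_idem[OF k] .
  have k': "1 - k \<in> A"
    using proj_mem[OF proj_compl[OF k]] .
  have "k * (1 - k) = 0"
    using kk by (simp add: algebra_simps)
  then have ak': "a * (1 - k) = 0"
    using ann k' by blast
  \<comment> \<open>\<open>a\<close> annihilates the Jordan product of \<open>x\<close> and \<open>1 - k\<close>, hence so does \<open>k\<close>.\<close>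
  have "a * (x * (1 - k)) = x * (a * (1 - k))"
    using ax unfolding comm_def by (metis mult.assoc)
  then have "a * (x * (1 - k) + (1 - k) * x) = x * (a * (1 - k)) + (a * (1 - k)) * x"
    by (simp only: distrib_left mult.assoc)
  also have "\<dots> = 0"
    unfolding ak' by simp
  finally have "k * (x * (1 - k) + (1 - k) * x) = 0"
    using ann jordan_mem[OF x k'] by blast
  moreover have "k * (x * (1 - k) + (1 - k) * x) = k * x - k * x * k"
    using kk idempotent_absorb[OF kk] by (simp add: algebra_simps)
  ultimately show "k * x * k = k * x"
    by (metis right_minus_eq)
qed

lemma proj_sum_annihilates_iff:
  assumes e: "e \<in> projs A" and f: "f \<in> projs A" and t: "t \<in> projs A"
  shows "(e + f) * (1 - t) = 0 \<longleftrightarrow> sa_le Ap e t \<and> sa_le Ap f t"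
proof
  assume ef: "(e + f) * (1 - t) = 0"
  have t': "1 - t \<in> Ap"
    using proj_pos[OF proj_compl[OF t]] .
  have "(1 - t) * e * (1 - t) + (1 - t) * f * (1 - t) = (1 - t) * ((e + f) * (1 - t))"
    by (simp add: algebra_simps)
  then have sum: "(1 - t) * e * (1 - t) + (1 - t) * f * (1 - t) = 0"
    using ef by simp
  have te: "(1 - t) * e * (1 - t) = 0"
    using pos_add_eq_zero[OF sandwich_pos[OF t' proj_pos[OF e]] sandwich_pos[OF t' proj_pos[OF f]] sum] .
  then have tf: "(1 - t) * f * (1 - t) = 0"
    using sum by simp
  have "e * (1 - t) = 0" "f * (1 - t) = 0"
    using sandwich_eq_zero[OF pos_mem[OF t'] proj_pos[OF e] te]
      sandwich_eq_zero[OF pos_mem[OF t'] proj_pos[OF f] tf] by simp_all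
  then show "sa_le Ap e t \<and> sa_le Ap f t"
    using proj_le_iff[OF e t] proj_le_iff[OF f t] by (simp add: algebra_simps)
next
  assume "sa_le Ap e t \<and> sa_le Ap f t"
  then show "(e + f) * (1 - t) = 0"
    using proj_le_iff[OF e t] proj_le_iff[OF f t] by (simp add: algebra_simps)
qed

lemma proj_join_exists:
  assumes e: "e \<in> projs A" and f: "f \<in> projs A"
  obtains j where "j \<in> projs A" "sa_le Ap e j" "sa_le Ap f j"
    "\<And>t. t \<in> projs A \<Longrightarrow> sa_le Ap e t \<Longrightarrow> sa_le Ap f t \<Longrightarrow> sa_le Ap j t"
    "\<And>x. x \<in> A \<Longrightarrow> comm e x \<Longrightarrow> comm f x \<Longrightarrow> comm j x"
proof -
  have ef: "e + f \<in> A"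
    using add_mem[OF proj_mem[OF e] proj_mem[OF f]] .
  obtain k where kA: "k \<in> A" and kk: "k * k = k" and ann: "\<forall>b\<in>A. (e + f) * b = 0 \<longleftrightarrow> k * b = 0"
    using annihilator_proj_exists[OF ef] by blast
  have k: "k \<in> projs A"
    using kA kk by (simp add: projs_def)
  have "k * (1 - k) = 0"
    using kk by (simp add: algebra_simps)
  then have "(e + f) * (1 - k) = 0"
    using ann proj_mem[OF proj_compl[OF k]] by blast
  then have upper: "sa_le Ap e k" "sa_le Ap f k"
    using proj_sum_annihilates_iff[OF e f k] by simp_all
  have least: "sa_le Ap k t" if t: "t \<in> projs A" "sa_le Ap e t" "sa_le Ap f t" for t
  proof -
    have "(e + f) * (1 - t) = 0"
      using proj_sum_annihilates_iff[OF e f t(1)] t by simp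
    then have "k * (1 - t) = 0"
      using ann proj_mem[OF proj_compl[OF t(1)]] by blast
    then show ?thesis
      using proj_le_iff[OF k t(1)] by (simp add: algebra_simps)
  qed
  have "comm k x" if "x \<in> A" "comm e x" "comm f x" for x
    using annihilator_proj_comm[OF ef k ann] that by (simp add: comm_add)
  then show ?thesis
    using that k upper least by blast
qed

lemma pjoin_props:
  assumes e: "e \<in> projs A" and f: "f \<in> projs A"
  shows "pjoin A Ap e f \<in> projs A" "sa_le Ap e (pjoin A Ap e f)" "sa_le Ap f (pjoin A Ap e f)"
    "\<And>t. t \<in> projs A \<Longrightarrow> sa_le Ap e t \<Longrightarrow> sa_le Ap f t \<Longrightarrow> sa_le Ap (pjoin A Ap e f) t"
    "\<And>x. x \<in> A \<Longrightarrow> comm e x \<Longrightarrow> comm f x \<Longrightarrow> comm (pjoin A Ap e f) x"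
proof -
  obtain j where j: "j \<in> projs A" "sa_le Ap e j" "sa_le Ap f j"
    "\<And>t. t \<in> projs A \<Longrightarrow> sa_le Ap e t \<Longrightarrow> sa_le Ap f t \<Longrightarrow> sa_le Ap j t"
    "\<And>x. x \<in> A \<Longrightarrow> comm e x \<Longrightarrow> comm f x \<Longrightarrow> comm j x"
    using proj_join_exists[OF e f] by blast
  have "pjoin A Ap e f = j"
    unfolding pjoin_def by (rule the_equality) (use j sa_le_antisym in blast)+
  then show "pjoin A Ap e f \<in> projs A" "sa_le Ap e (pjoin A Ap e f)" "sa_le Ap f (pjoin A Ap e f)"
    "\<And>t. t \<in> projs A \<Longrightarrow> sa_le Ap e t \<Longrightarrow> sa_le Ap f t \<Longrightarrow> sa_le Ap (pjoin A Ap e f) t"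
    "\<And>x. x \<in> A \<Longrightarrow> comm e x \<Longrightarrow> comm f x \<Longrightarrow> comm (pjoin A Ap e f) x"
    using j by simp_all
qed

lemma pmeet_eq_compl_pjoin:
  assumes e: "e \<in> projs A" and f: "f \<in> projs A"
  shows "pmeet A Ap e f = 1 - pjoin A Ap (1 - e) (1 - f)"
  unfolding pmeet_def
proof (rule the_equality)
  let ?m = "1 - pjoin A Ap (1 - e) (1 - f)"
  note J = pjoin_props[OF proj_compl[OF e] proj_compl[OF f]]
  have greatest: "sa_le Ap t ?m" if t: "t \<in> projs A" "sa_le Ap t e" "sa_le Ap t f" for t
  proof -
    have "sa_le Ap (pjoin A Ap (1 - e) (1 - f)) (1 - t)"
      using J(4)[OF proj_compl[OF t(1)]] t(2,3) sa_le_compl_iff by blast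
    then show ?thesis
      by (simp add: sa_le_def algebra_simps)
  qed
  have lower: "sa_le Ap ?m e" "sa_le Ap ?m f"
    using J(2,3) by (simp_all add: sa_le_def algebra_simps)
  show "?m \<in> projs A \<and> sa_le Ap ?m e \<and> sa_le Ap ?m f \<and>
      (\<forall>t\<in>projs A. sa_le Ap t e \<and> sa_le Ap t f \<longrightarrow> sa_le Ap t ?m)"
    using proj_compl[OF J(1)] lower greatest by blast
  fix r
  assume "r \<in> projs A \<and> sa_le Ap r e \<and> sa_le Ap r f \<and>
      (\<forall>t\<in>projs A. sa_le Ap t e \<and> sa_le Ap t f \<longrightarrow> sa_le Ap t r)"
  then show "r = ?m"
    using greatest proj_compl[OF J(1)] lower sa_le_antisym by blast
qed

lemma pmeet_props:
  assumes e: "e \<in> projs A" and f: "f \<in> projs A"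
  shows "pmeet A Ap e f \<in> projs A"
    "\<And>x. x \<in> A \<Longrightarrow> comm e x \<Longrightarrow> comm f x \<Longrightarrow> comm (pmeet A Ap e f) x"
  unfolding pmeet_eq_compl_pjoin[OF e f]
  using pjoin_props[OF proj_compl[OF e] proj_compl[OF f]] by (simp_all add: proj_compl comm_one_minus_iff)

lemma pos_le_one_of_square_le_one:
  assumes c: "c \<in> Ap" and c2: "sa_le Ap (c * c) 1"
  shows "sa_le Ap c 1" and "sa_le Ap (c * c) c"
proof -
  have cA: "c \<in> A"
    using pos_mem[OF c] .
  have "sa_le Ap 1 (1 + c)"
    using c by (simp add: sa_le_def)
  then obtain b where b: "b \<in> A" "(1 + c) * b = 1" "b * (1 + c) = 1"
    using inverse_exists[OF add_mem[OF one_mem cA]] by blast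
  have b_comm: "comm b (1 + c)"
    using b(2,3) by (simp add: comm_def)
  then have bc: "comm b c"
    by (simp add: comm_def algebra_simps)
  have "b * (1 + c) * b = b"
    using b(3) by simp
  then have b_pos: "b \<in> Ap"
    using commuting_sandwich_pos[OF b(1) pos_add[OF one_pos c] b_comm] by simp
  have one_minus_sq: "1 - c * c \<in> Ap"
    using c2 by (simp add: sa_le_def)
  \<comment> \<open>\<open>1 - c = (1 - c * c) b\<close> with \<open>b = (1 + c)\<inverse>\<close>, a product of commuting positive elements.\<close>
  have "comm c b"
    using bc by (simp add: comm_sym)
  then have "comm (1 - c * c) b"
    by (intro comm_diff comm_mult comm_one)
  then have "(1 - c * c) * b \<in> Ap"
    using commuting_mult_pos[OF one_minus_sq b_pos] by simp
  moreover have "(1 - c * c) * b = (1 - c) * ((1 + c) * b)"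
    by (simp add: algebra_simps)
  ultimately have one_minus: "1 - c \<in> Ap"
    using b(2) by simp
  then show "sa_le Ap c 1"
    by (simp add: sa_le_def)
  have "c * (1 - c) \<in> Ap"
    using commuting_mult_pos[OF c one_minus] by (simp add: comm_def algebra_simps)
  then show "sa_le Ap (c * c) c"
    by (simp add: sa_le_def algebra_simps)
qed

lemma commutator_proj_mem_Cm:
  assumes p: "p \<in> projs A" and q: "q \<in> projs A"
  shows "pmeet A Ap (pmeet A Ap (pmeet A Ap (pjoin A Ap p q) (pjoin A Ap p (1 - q)))
      (pjoin A Ap (1 - p) q)) (pjoin A Ap (1 - p) (1 - q)) \<in> Cm A p \<inter> Cm A q"
proof -
  define Z where "Z = {e \<in> projs A. comm e p \<and> comm e q}"
  have join: "pjoin A Ap e f \<in> Z" if e: "e \<in> {p, 1 - p}" and f: "f \<in> {q, 1 - q}" for e f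
  proof -
    have ep: "e \<in> projs A" and fp: "f \<in> projs A"
      using e f p q proj_compl by auto
    note J = pjoin_props[OF ep fp]
    have "comm e (pjoin A Ap e f)" "comm f (pjoin A Ap e f)"
      using proj_le_imp_comm[OF ep J(1) J(2)] proj_le_imp_comm[OF fp J(1) J(3)] .
    then show ?thesis
      using e f J(1) unfolding Z_def by (auto simp: comm_one_minus_iff comm_sym)
  qed
  have meet: "pmeet A Ap e f \<in> Z" if "e \<in> Z" "f \<in> Z" for e f
    using that pmeet_props[of e f] proj_mem[OF p] proj_mem[OF q] unfolding Z_def
    by (auto simp: comm_sym)
  have "pmeet A Ap (pmeet A Ap (pmeet A Ap (pjoin A Ap p q) (pjoin A Ap p (1 - q)))
      (pjoin A Ap (1 - p) q)) (pjoin A Ap (1 - p) (1 - q)) \<in> Z"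
    by (intro meet join) simp_all
  then show ?thesis
    unfolding Z_def Cm_def by (auto simp: proj_mem comm_sym)
qed

end

theorem theorem4p3:
  fixes A Ap :: "'r::real_algebra_1 set" and p q r c s :: 'r
  assumes SA: "synaptic_algebra A Ap"
    and p: "p \<in> projs A" and q: "q \<in> projs A"
    and r_def: "r = pmeet A Ap (pmeet A Ap (pmeet A Ap (pjoin A Ap p q) (pjoin A Ap p (1 - q)))
                     (pjoin A Ap (1 - p) q)) (pjoin A Ap (1 - p) (1 - q))"
    and c_def: "c = sa_sqrt Ap (p * q * p + (1 - p) * (1 - q) * (1 - p))"
    and s_def: "s = sa_sqrt Ap (p * (1 - q) * p + (1 - p) * q * (1 - p))"
  shows
        "(c * c = p * q * p + (1 - p) * (1 - q) * (1 - p) \<and>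
     p * q * p + (1 - p) * (1 - q) * (1 - p) = 1 - (p - q) * (p - q) \<and>
     1 - (p - q) * (p - q) = (p - (1 - q)) * (p - (1 - q)) \<and>
     (p - (1 - q)) * (p - (1 - q)) = (p + q - 1) * (p + q - 1)) \<and>
    (s * s = p * (1 - q) * p + (1 - p) * q * (1 - p) \<and>
     p * (1 - q) * p + (1 - p) * q * (1 - p) = (p - q) * (p - q)) \<and>
    (p * (c * c) = p * q * p \<and> p * q * p = (c * c) * p \<and>
     q * (c * c) = q * p * q \<and> q * p * q = (c * c) * q \<and>
     p * (s * s) = p * (1 - q) * p \<and> p * (1 - q) * p = (s * s) * p \<and>
     q * (s * s) = q * (1 - p) * q \<and> q * (1 - p) * q = (s * s) * q \<and>
     (s * s) * (1 - p) = (1 - p) * q * (1 - p) \<and> (1 - p) * q * (1 - p) = (1 - p) * (s * s)) \<and>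
    (c = sa_abs Ap (p - (1 - q)) \<and> s = sa_abs Ap (p - q)) \<and>
    (c * c + s * s = 1) \<and>
    (sa_le Ap 0 (c * c) \<and> sa_le Ap (c * c) 1 \<and> sa_le Ap 0 (s * s) \<and> sa_le Ap (s * s) 1 \<and>
     sa_le Ap 0 c \<and> sa_le Ap c 1 \<and> sa_le Ap 0 s \<and> sa_le Ap s 1 \<and>
     sa_le Ap (c * c) c \<and> sa_le Ap (s * s) s) \<and>
    (Cm A c = Cm A (c * c) \<and> Cm A (c * c) = Cm A (s * s) \<and> Cm A (s * s) = Cm A s) \<and>
    (comm c p \<and> comm c q \<and> comm c r \<and> comm s p \<and> comm s q \<and> comm s r \<and> comm c s) \<and>
    (Cm A p \<inter> Cm A q \<subseteq> Cm A c \<and> Cm A c = Cm A s)"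
proof -
  interpret synaptic A Ap
    by (rule synaptic.intro) (fact SA)
  define X where "X = p * q * p + (1 - p) * (1 - q) * (1 - p)"
  define Y where "Y = p * (1 - q) * p + (1 - p) * q * (1 - p)"
  have pp: "p * p = p" and qq: "q * q = q"
    using p q by (simp_all add: proj_idem)
  note squares = idempotent_pair_squares[OF pp qq]
  note compressions = idempotent_pair_compressions[OF pp qq X_def Y_def]
  have Y_eq: "Y = 1 - X"
    unfolding X_def Y_def using squares(1,4) by simp
  have X_pos: "X \<in> Ap" and Y_pos: "Y \<in> Ap"
    unfolding X_def Y_def using p q by (simp_all add: pos_add sandwich_pos proj_pos proj_compl)
  have c: "c \<in> Ap" "c * c = X" "Cm A c = Cm A X"
    unfolding c_def X_def[symmetric] using sa_sqrt_props[OF X_pos] Cm_sa_sqrt[OF X_pos] by simp_all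
  have s: "s \<in> Ap" "s * s = Y" "Cm A s = Cm A X"
    unfolding s_def Y_def[symmetric] using sa_sqrt_props[OF Y_pos] Cm_sa_sqrt[OF Y_pos] Y_eq
    by (simp_all add: Cm_one_minus)
  have "sa_le Ap (c * c) 1" "sa_le Ap (s * s) 1"
    using c s X_pos Y_pos Y_eq by (simp_all add: sa_le_def)
  note c_le = pos_le_one_of_square_le_one[OF c(1) this(1)]
    and s_le = pos_le_one_of_square_le_one[OF s(1) this(2)]
  have centr: "Cm A p \<inter> Cm A q \<subseteq> Cm A X"
    unfolding X_def Cm_def by (auto intro!: comm_add comm_mult comm_diff comm_one)
  have "p \<in> Cm A X" "q \<in> Cm A X"
    using compressions(1-4) p q by (simp_all add: Cm_def comm_def proj_mem)
  moreover have "r \<in> Cm A X"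
    using commutator_proj_mem_Cm[OF p q] centr unfolding r_def by blast
  moreover have "s \<in> Cm A X"
    using pos_mem[OF s(1)] s(3)[symmetric] by (simp add: Cm_def comm_def)
  ultimately have "{p, q, r, s} \<subseteq> Cm A c \<inter> Cm A s"
    using c(3) s(3) by simp
  then have comms: "comm c p" "comm c q" "comm c r" "comm s p" "comm s q" "comm s r" "comm c s"
    by (simp_all add: Cm_def)
  have abs: "c = sa_abs Ap (p - (1 - q))" "s = sa_abs Ap (p - q)"
    unfolding sa_abs_def c_def s_def using squares by simp_all
  have bounds: "sa_le Ap 0 X" "sa_le Ap X 1" "sa_le Ap 0 Y" "sa_le Ap Y 1" "sa_le Ap 0 c" "sa_le Ap 0 s"
    using c(1) s(1) X_pos Y_pos Y_eq by (simp_all add: sa_le_def)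
  have "X + Y = 1" "Cm A X = Cm A Y" "Cm A Y = Cm A s" "Cm A c = Cm A s"
    "Cm A p \<inter> Cm A q \<subseteq> Cm A c"
    using Y_eq c(3) s(3) centr by (simp_all add: Cm_one_minus)
  then show ?thesis
    using squares compressions X_def Y_def abs bounds c_le s_le c(3) comms
    unfolding c(2) s(2) by blast
qed

end
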